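(* Fix a binary instance $(\mu_0,\hat q)$. There is a constant $C<\infty$, depending only on $(\mu_0,\hat q)$, such that for every $T\ge 4$ and every bias $\alpha^\star\in(0,1]$, the Safe Exploration policy satisfies $\mathrm{Reg}_T(\mathrm{SE};\alpha^\star)\le C\log\log T$. In particular one may take any $C$ proportional to $2\frac{(1-\mu_0)^2}{(\hat q-\mu_0)\hat q}+1$, times an absolute constant.
   Context: Binary model: states $\Omega=\{0,1\}$, actions $A=\{0,1\}$, prior $\mu_0=\Pr(\omega=1)\in(0,1)$, cutoff $\hat q\in(\mu_0,1)$, sender utility $u_S(a,\omega)=\mathbf 1\{a=1\}$. A receiver with fixed unknown bias $\alpha^\star\in(0,1]$ takes action $1$ after Bayesian posterior $\nu=\Pr(\omega=1\mid s)$ iff $(1-\alpha^\star)\mu_0+\alpha^\star\nu\ge\hat q$. Define $\nu_B(\alpha)=\mu_0+(\hat q-\mu_0)/\alpha$ and $\alpha_{\min}=(\hat q-\mu_0)/(1-\mu_0)$. For $\alpha\in[\alpha_{\min},1]$, let $\tau(\alpha)$ be the Bayes-plausible scheme with mass $1-\mu_0/\nu_B(\alpha)$ on posterior $0$ and mass $\mu_0/\nu_B(\alpha)$ on posterior $\nu_B(\alpha)$. Repeated interaction over $T$ rounds. In each round the sender commits to a Bayes-plausible posterior distribution, a state $\omega_t\sim\mu_0$ and posterior $\nu_t$ are realized, the receiver acts, and the sender observes $\nu_t$ and the action. Let $\mathrm{OPT}(\alpha^\star)$ be the supremum over Bayes-plausible distributions of the probability of action $1$. The regret is $\mathrm{Reg}_T=T\cdot\mathrm{OPT}(\alpha^\star)-\sum_t\mathbb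 E[\Pr(\text{action }1\text{ in round }t\mid\text{history})]$. Safe Exploration (SE) policy: initialize $\underline\alpha=\alpha_{\min}$, $\overline\alpha=1$, $\epsilon=1/2$. While $\overline\alpha-\underline\alpha>1/T$ and rounds remain, run a phase: 1. Set $m_{\rm prev}=\underline\alpha$ and $m=\underline\alpha+\epsilon$. 2. While $m\le\overline\alpha$ and rounds remain, play $\tau(m)$ for one round. If the realized posterior is nonzero: - if the receiver plays action $1$, set $m_{\rm prev}\gets m$ and $m\gets m+\epsilon$; - otherwise set $(\underline\alpha,\overline\alpha)\gets(m_{\rm prev},m)$, $\epsilon\gets\epsilon^2$, and end the phase. 3. If the inner loop ended because $m>\overline\alpha$, set $(\underline\alpha,\overline\alpha)\gets(m_{\rm prev},\overline\alpha)$ and $\epsilon\gets\epsilon^2$. After exploration ends, play $\tau(\underline\alpha)$ in all remaining rounds. *)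

theory Defs
  imports "HOL-Probability.Probability_Mass_Function"
begin

text \<open>Binary persuasion instance: prior mu0 = Pr(omega = 1), cutoff qh.
  Receiver with bias a acts (action 1) after posterior v iff
  (1 - a) * mu0 + a * v >= qh.\<close>

definition acts :: "real \<Rightarrow> real \<Rightarrow> real \<Rightarrow> real \<Rightarrow> bool" where
  "acts mu0 qh a v \<longleftrightarrow> (1 - a) * mu0 + a * v \<ge> qh"

definition nuB :: "real \<Rightarrow> real \<Rightarrow> real \<Rightarrow> real" where
  "nuB mu0 qh a = mu0 + (qh - mu0) / a"

definition alpha_min :: "real \<Rightarrow> real \<Rightarrow> real" where
  "alpha_min mu0 qh = (qh - mu0) / (1 - mu0)"

definition bayes_plausible :: "real \<Rightarrow> real pmf \<Rightarrow> bool" where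
  "bayes_plausible mu0 p \<longleftrightarrow>
     set_pmf p \<subseteq> {0..1} \<and> measure_pmf.expectation p (\<lambda>v. v) = mu0"

definition OPT :: "real \<Rightarrow> real \<Rightarrow> real \<Rightarrow> real" where
  "OPT mu0 qh a = Sup {measure_pmf.prob p {v. acts mu0 qh a v} | p. bayes_plausible mu0 p}"

definition tau :: "real \<Rightarrow> real \<Rightarrow> real \<Rightarrow> real pmf" where
  "tau mu0 qh a = map_pmf (\<lambda>b. if b then nuB mu0 qh a else 0)
                          (bernoulli_pmf (mu0 / nuB mu0 qh a))"

text \<open>State of the Safe Exploration policy:
  Explore lo hi eps mprev m  -- inside a phase, about to play tau(m);
  Exploit lo                 -- exploration is over, play tau(lo) forever.\<close>
datatype se_state = Explore real real real real real | Exploit real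

text \<open>Phases whose
  first candidate m = lo + eps already exceeds hi use no rounds; they only square eps
  (and leave lo, hi unchanged), so we skip to the first nonempty phase.\<close>
definition enter_phase :: "nat \<Rightarrow> real \<Rightarrow> real \<Rightarrow> real \<Rightarrow> se_state" where
  "enter_phase T lo hi eps =
     (if hi - lo > 1 / real T then
        (let k = (LEAST k::nat. lo + eps ^ (2 ^ k) \<le> hi) in
           Explore lo hi (eps ^ (2 ^ k)) lo (lo + eps ^ (2 ^ k)))
      else Exploit lo)"

definition se_init :: "real \<Rightarrow> real \<Rightarrow> nat \<Rightarrow> se_state" where
  "se_init mu0 qh T = enter_phase T (alpha_min mu0 qh) 1 (1/2)"

fun se_play :: "real \<Rightarrow> real \<Rightarrow> se_state \<Rightarrow> real pmf" where
  "se_play mu0 qh (Explore lo hi eps mp m) = tau mu0 qh m"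
| "se_play mu0 qh (Exploit lo) = tau mu0 qh lo"

fun se_update :: "nat \<Rightarrow> se_state \<Rightarrow> real \<Rightarrow> bool \<Rightarrow> se_state" where
  "se_update T (Explore lo hi eps mp m) v act =
     (if v = 0 then Explore lo hi eps mp m
      else if act then
        (if m + eps \<le> hi then Explore lo hi eps m (m + eps)
         else enter_phase T m hi (eps ^ 2))
      else enter_phase T mp m (eps ^ 2))"
| "se_update T (Exploit lo) v act = Exploit lo"

text \<open>Expected sum, over n remaining rounds, of Pr(action 1 in the round | history).\<close>
fun se_value :: "real \<Rightarrow> real \<Rightarrow> real \<Rightarrow> nat \<Rightarrow> nat \<Rightarrow> se_state \<Rightarrow> real" where
  "se_value mu0 qh a T 0 s = 0"
| "se_value mu0 qh a T (Suc n) s =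
     measure_pmf.prob (se_play mu0 qh s) {v. acts mu0 qh a v}
     + measure_pmf.expectation (se_play mu0 qh s)
         (\<lambda>v. se_value mu0 qh a T n (se_update T s v (acts mu0 qh a v)))"

definition SE_regret :: "real \<Rightarrow> real \<Rightarrow> real \<Rightarrow> nat \<Rightarrow> real" where
  "SE_regret mu0 qh a T = real T * OPT mu0 qh a - se_value mu0 qh a T T (se_init mu0 qh T)"

end

theory Submission
  imports Defs
begin

text \<open>Let f(m) = mu0 / nuB(m) (signal_prob) be the probability with which tau(m) sends
  its informative posterior nuB(m). By Markov's inequality OPT(a) \<le> f(a), and a receiver with
  bias a follows tau(m) exactly when m \<le> a. So an exploration round at m \<le> a loses
  f(a) - f(m) \<le> B (a - m) f(m), where B = (1 - mu0)^2 / (qh - mu0) (lip_const), and a round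
  at m > a loses at most f(a) \<le> f(m) / qh: the loss is f(m), the probability that the round
  changes the state, times a deterministic amount. This is paid for by a potential which,
  inside a phase of step eps, charges B (x^2/eps + x) for the remaining distance x = a - m,
  1/qh for the rejection closing the phase, and 3B + 1/qh (phase_cost) for every later phase.
  Since the step is squared from phase to phase, a phase starts with a bracket of width w with
  w^2 \<le> 2 eps, so its distance charge is at most 3B. The steps run through (1/2)^(2^k), and a
  phase is only entered while w > 1/T, i.e. with eps > 1/(2T^2); hence there are O(log log T)
  phases. Once the bracket is narrower than 1/T, every exploitation round loses at most B/T.
  (If a < alpha_min, no posterior makes the receiver act, so OPT(a) = 0 and the regret is not
  positive.)\<close>

section \<open>Step sizes and the number of phases\<close>

lemma ln_2_ge: "3/5 \<le> ln (2::real)"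
proof -
  have "exp (3/5::real) ^ 5 = exp 3" by (subst exp_of_nat_mult[symmetric]) simp
  also have "exp (3::real) = exp 1 ^ 3" by (subst exp_of_nat_mult[symmetric]) simp
  also have "\<dots> \<le> 3 ^ 3" by (rule power_mono) (use exp_le in auto)
  also have "\<dots> < (2::real) ^ 5" by simp
  finally have "exp (3/5::real) < 2" by (rule power_less_imp_less_base) simp
  thus ?thesis by (metis exp_le_cancel_iff exp_ln less_imp_le zero_less_numeral)
qed

lemma ln_ln_ge:
  fixes x :: real
  assumes "4 \<le> x"
  shows "1/6 \<le> ln (ln x)"
proof -
  have "ln (4::real) = 2 * ln 2" using ln_realpow[of 2 2] by simp
  moreover have "ln 4 \<le> ln x" using assms by simp
  ultimately have lnx: "6/5 \<le> ln x" using ln_2_ge by linarith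
  have "1 - 1 / ln x \<le> ln (ln x)"
    using ln_le_minus_one[of "1 / ln x"] lnx by (simp add: ln_div)
  moreover have "1 / ln x \<le> 5/6" using lnx by (simp add: field_simps)
  ultimately show ?thesis by linarith
qed

definition eps_seq :: "nat \<Rightarrow> real" where
  "eps_seq k = (1/2) ^ 2 ^ k"

lemma eps_seq_pos: "0 < eps_seq k"
  by (simp add: eps_seq_def)

lemma eps_seq_less_1: "eps_seq k < 1"
  by (simp add: eps_seq_def power_less_one_iff)

lemma eps_seq_power: "eps_seq k ^ 2 ^ j = eps_seq (k + j)"
  by (simp add: eps_seq_def power_mult[symmetric] power_add)

lemma eps_seq_square: "eps_seq k ^ 2 = eps_seq (Suc k)"
  using eps_seq_power[of k 1] by simp

lemma index_le_if_eps_seq_gt: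
  fixes x :: real
  assumes x: "4 \<le> x" and gt: "1 / (2 * x^2) < eps_seq j"
  shows "real j \<le> 20/3 + 5/3 * ln (ln x)"
proof -
  have lnx: "ln 2 \<le> ln x" "0 < ln x" using x by auto
  have "1 / (2 * x^2) < 1 / 2 ^ 2 ^ j" using gt by (simp add: eps_seq_def power_one_over)
  hence "2 ^ 2 ^ j < 2 * x^2" using x by (simp add: field_simps)
  hence "ln (2 ^ 2 ^ j) < ln (2 * x^2)" using x by (subst ln_less_cancel_iff) auto
  hence "2 ^ j * ln 2 < ln 2 + 2 * ln x" using x by (simp add: ln_mult ln_realpow)
  moreover have "2 ^ j * (3/5) \<le> (2 ^ j :: real) * ln 2"
    using ln_2_ge by (intro mult_left_mono) auto
  ultimately have "2 ^ j < 5 * ln x" using lnx by linarith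
  hence "ln (2 ^ j) < ln (5 * ln x)" using lnx by (subst ln_less_cancel_iff) auto
  hence "real j * ln 2 < ln 5 + ln (ln x)" using lnx by (simp add: ln_mult ln_realpow)
  moreover have "ln (5::real) \<le> 4" using ln_le_minus_one[of 5] by simp
  moreover have "real j * (3/5) \<le> real j * ln 2" using ln_2_ge by (intro mult_left_mono) auto
  ultimately show ?thesis by linarith
qed

lemma eps_seq_gt_subset:
  fixes x :: real
  assumes "4 \<le> x"
  shows "{j. 1 / (2 * x^2) < eps_seq j} \<subseteq> {..nat \<lfloor>20/3 + 5/3 * ln (ln x)\<rfloor>}"
  using index_le_if_eps_seq_gt[OF assms] by (auto simp: le_nat_floor)

lemma finite_eps_seq_gt:
  fixes x :: real
  assumes "4 \<le> x"
  shows "finite {j. 1 / (2 * x^2) < eps_seq j}"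
  using eps_seq_gt_subset[OF assms] by (rule finite_subset) simp

lemma card_eps_seq_gt_le:
  fixes x :: real
  assumes x: "4 \<le> x"
  shows "real (card {j. 1 / (2 * x^2) < eps_seq j}) \<le> 48 * ln (ln x)"
proof -
  define c where "c = 20/3 + 5/3 * ln (ln x)"
  have L: "1/6 \<le> ln (ln x)" using ln_ln_ge[OF x] .
  have "card {j. 1 / (2 * x^2) < eps_seq j} \<le> card {..nat \<lfloor>c\<rfloor>}"
    using eps_seq_gt_subset[OF x] unfolding c_def by (intro card_mono) auto
  hence "real (card {j. 1 / (2 * x^2) < eps_seq j}) \<le> real (nat \<lfloor>c\<rfloor>) + 1" by simp
  moreover have "real (nat \<lfloor>c\<rfloor>) \<le> c" using L by (simp add: c_def)
  ultimately show ?thesis using L unfolding c_def by linarith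
qed

lemma repeated_squaring_least:
  fixes e w :: real
  assumes e: "0 < e" "e < 1" and w: "0 < w" "w^2 \<le> 2 * e"
  defines "k \<equiv> LEAST k. e ^ 2 ^ k \<le> w"
  shows "e ^ 2 ^ k \<le> w" "w^2 \<le> 2 * e ^ 2 ^ k"
proof -
  have "\<exists>k. e ^ 2 ^ k \<le> w"
  proof -
    obtain n where n: "e ^ n < w" using real_arch_pow_inv[OF w(1) e(2)] by blast
    have "e ^ 2 ^ n \<le> e ^ n" using e by (intro power_decreasing) auto
    thus ?thesis using n by (intro exI[of _ n]) simp
  qed
  thus "e ^ 2 ^ k \<le> w" unfolding k_def by (rule LeastI_ex)
  show "w^2 \<le> 2 * e ^ 2 ^ k"
  proof (cases k)
    case (Suc j)
    have "\<not> e ^ 2 ^ j \<le> w" using Suc unfolding k_def by (intro not_less_Least) simp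
    hence "w^2 < (e ^ 2 ^ j)^2" using w by (intro power_strict_mono) auto
    also have "\<dots> = e ^ 2 ^ k" by (simp add: Suc power_mult[symmetric] mult.commute)
    finally have "w^2 < e ^ 2 ^ k" .
    moreover have "0 < e ^ 2 ^ k" using e by simp
    ultimately show ?thesis by linarith
  qed (use w in simp)
qed

lemma enter_phase_Explore:
  fixes e :: real
  assumes "1 / real T < hi - lo" "0 < e" "e < 1" "(hi - lo)^2 \<le> 2 * e"
  obtains j where "enter_phase T lo hi e = Explore lo hi (e ^ 2 ^ j) lo (lo + e ^ 2 ^ j)"
    "e ^ 2 ^ j \<le> hi - lo" "(hi - lo)^2 \<le> 2 * e ^ 2 ^ j"
proof -
  define j where "j = (LEAST j. e ^ 2 ^ j \<le> hi - lo)"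
  have "0 \<le> 1 / real T" by simp
  hence "0 < hi - lo" using assms(1) by linarith
  hence "e ^ 2 ^ j \<le> hi - lo" "(hi - lo)^2 \<le> 2 * e ^ 2 ^ j"
    using repeated_squaring_least assms(2-4) unfolding j_def by blast+
  moreover have "(LEAST j. lo + e ^ 2 ^ j \<le> hi) = j"
    unfolding j_def by (simp add: le_diff_eq add.commute)
  ultimately show ?thesis using that assms(1) by (simp add: enter_phase_def)
qed

section \<open>The binary persuasion instance\<close>

lemma se_value_nonneg: "0 \<le> se_value mu0 qh a T n s"
proof (induction n arbitrary: s)
  case (Suc n)
  have "0 \<le> measure_pmf.expectation (se_play mu0 qh s)
              (\<lambda>v. se_value mu0 qh a T n (se_update T s v (acts mu0 qh a v)))"
    by (rule integral_nonneg_AE) (use Suc.IH in simp)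
  thus ?case by simp
qed simp

locale binary_instance =
  fixes mu0 qh :: real
  assumes mu0_pos: "0 < mu0" and mu0_less_qh: "mu0 < qh" and qh_less_1: "qh < 1"
begin

abbreviation nu :: "real \<Rightarrow> real" where "nu \<equiv> nuB mu0 qh"
abbreviation amin :: real where "amin \<equiv> alpha_min mu0 qh"

definition signal_prob :: "real \<Rightarrow> real" where
  "signal_prob m = mu0 / nu m"

definition lip_const :: real where
  "lip_const = (1 - mu0)^2 / (qh - mu0)"

definition phase_cost :: real where
  "phase_cost = 3 * lip_const + 1 / qh"

definition regret_const :: real where
  "regret_const = 2 * lip_const / qh + 1"

lemma qh_pos: "0 < qh"
  using mu0_pos mu0_less_qh by linarith

lemma alpha_min_pos: "0 < amin"
  using mu0_less_qh qh_less_1 by (simp add: alpha_min_def)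

lemma alpha_min_le_1: "amin \<le> 1"
  using mu0_less_qh qh_less_1 by (simp add: alpha_min_def)

lemma lip_const_ge: "1 - mu0 \<le> lip_const"
proof -
  have "(1 - mu0) * (qh - mu0) \<le> (1 - mu0)^2"
    using mu0_less_qh qh_less_1 by (simp add: power2_eq_square)
  thus ?thesis using mu0_less_qh by (simp add: lip_const_def le_divide_eq)
qed

lemma lip_const_pos: "0 < lip_const"
  using lip_const_ge mu0_less_qh qh_less_1 by linarith

lemma phase_cost_pos: "0 < phase_cost"
  using lip_const_pos qh_pos by (simp add: phase_cost_def add_pos_pos)

lemma qh_le_nuB:
  assumes "0 < x" "x \<le> 1"
  shows "qh \<le> nu x"
proof -
  have "qh - mu0 \<le> (qh - mu0) / x" using assms mu0_less_qh by (simp add: le_divide_eq)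
  thus ?thesis by (simp add: nuB_def)
qed

lemma nuB_le_1:
  assumes "amin \<le> x"
  shows "nu x \<le> 1"
proof -
  have "qh - mu0 \<le> x * (1 - mu0)"
    using assms mu0_less_qh qh_less_1 by (simp add: alpha_min_def divide_le_eq)
  hence "(qh - mu0) / x \<le> 1 - mu0"
    using assms alpha_min_pos by (simp add: divide_le_eq mult.commute)
  thus ?thesis by (simp add: nuB_def)
qed

lemma nuB_pos: "0 < x \<Longrightarrow> x \<le> 1 \<Longrightarrow> 0 < nu x"
  using qh_le_nuB qh_pos by fastforce

lemma signal_prob_pos: "0 < x \<Longrightarrow> x \<le> 1 \<Longrightarrow> 0 < signal_prob x"
  using qh_le_nuB[of x] mu0_pos qh_pos by (simp add: signal_prob_def)

lemma signal_prob_le_1: "0 < x \<Longrightarrow> x \<le> 1 \<Longrightarrow> signal_prob x \<le> 1"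
  using qh_le_nuB[of x] mu0_pos mu0_less_qh by (simp add: signal_prob_def)

lemma signal_prob_le_mu0_div_qh: "0 < x \<Longrightarrow> x \<le> 1 \<Longrightarrow> signal_prob x \<le> mu0 / qh"
  using qh_le_nuB[of x] mu0_pos qh_pos by (simp add: signal_prob_def frac_le)

lemma mu0_le_signal_prob: "amin \<le> x \<Longrightarrow> x \<le> 1 \<Longrightarrow> mu0 \<le> signal_prob x"
  using nuB_le_1[of x] qh_le_nuB[of x] alpha_min_pos mu0_pos qh_pos
  by (simp add: signal_prob_def le_divide_eq)

lemma signal_prob_eq: "0 < x \<Longrightarrow> signal_prob x = mu0 * x / (mu0 * x + (qh - mu0))"
  by (simp add: signal_prob_def nuB_def field_simps)

lemma signal_prob_diff_le:
  assumes m: "amin \<le> m" "m \<le> a"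
  shows "signal_prob a - signal_prob m \<le> lip_const * (a - m) * signal_prob m"
proof -
  define d where "d = qh - mu0"
  have d: "0 < d" using mu0_less_qh by (simp add: d_def)
  have pos: "0 < m" "0 < a" using m alpha_min_pos by linarith+
  have A: "0 < mu0 * a + d" and M: "0 < mu0 * m + d"
    using mult_pos_pos[OF mu0_pos pos(2)] mult_pos_pos[OF mu0_pos pos(1)] d by linarith+
  have fa: "signal_prob a = mu0 * a / (mu0 * a + d)"
    and fm: "signal_prob m = mu0 * m / (mu0 * m + d)"
    using pos by (simp_all add: signal_prob_eq d_def)
  have dm: "d \<le> (1 - mu0) * m"
    using m qh_less_1 mu0_less_qh by (simp add: alpha_min_def d_def divide_le_eq mult.commute)
  also have "\<dots> \<le> (1 - mu0) * a" using m qh_less_1 mu0_less_qh by (intro mult_left_mono) auto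
  finally have "mu0 * d \<le> mu0 * ((1 - mu0) * a)" using mu0_pos by simp
  hence da: "d \<le> (1 - mu0) * (mu0 * a + d)" by (simp add: algebra_simps)
  have "d * d \<le> ((1 - mu0) * m) * ((1 - mu0) * (mu0 * a + d))"
    by (rule mult_mono[OF dm da]) (use d dm in auto)
  hence "d * d \<le> (1 - mu0)^2 * m * (mu0 * a + d)" by (simp add: power2_eq_square algebra_simps)
  hence key: "d / (mu0 * a + d) \<le> (1 - mu0)^2 * m / d"
    using A d by (simp add: pos_divide_le_eq pos_le_divide_eq)
  have "signal_prob a - signal_prob m = (mu0 * (a - m) / (mu0 * m + d)) * (d / (mu0 * a + d))"
    unfolding fa fm using A M by (simp add: field_simps)
  also have "\<dots> \<le> (mu0 * (a - m) / (mu0 * m + d)) * ((1 - mu0)^2 * m / d)"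
    using key m M mu0_pos by (intro mult_left_mono) auto
  also have "\<dots> = lip_const * (a - m) * signal_prob m"
    unfolding fm lip_const_def d_def[symmetric] using M d by (simp add: field_simps)
  finally show ?thesis .
qed

lemma signal_prob_le_div_qh:
  assumes "0 < a" "a \<le> 1" "amin \<le> m" "m \<le> 1"
  shows "signal_prob a \<le> signal_prob m / qh"
proof -
  have "signal_prob a \<le> mu0 / qh" using signal_prob_le_mu0_div_qh assms by simp
  also have "\<dots> \<le> signal_prob m / qh"
    using mu0_le_signal_prob assms qh_pos by (simp add: divide_right_mono)
  finally show ?thesis .
qed

lemma acts_iff_nuB_le:
  assumes "0 < a"
  shows "acts mu0 qh a v \<longleftrightarrow> nu a \<le> v"
proof -
  have "acts mu0 qh a v \<longleftrightarrow> qh - mu0 \<le> a * (v - mu0)" by (simp add: acts_def algebra_simps)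
  also have "\<dots> \<longleftrightarrow> (qh - mu0) / a \<le> v - mu0" using assms by (simp add: divide_le_eq mult.commute)
  finally show ?thesis unfolding nuB_def by linarith
qed

lemma acts_nuB_iff:
  assumes "0 < a" "0 < m"
  shows "acts mu0 qh a (nu m) \<longleftrightarrow> m \<le> a"
proof -
  have "acts mu0 qh a (nu m) \<longleftrightarrow> (qh - mu0) / a \<le> (qh - mu0) / m"
    using assms by (simp add: acts_iff_nuB_le nuB_def)
  also have "\<dots> \<longleftrightarrow> (qh - mu0) * m \<le> (qh - mu0) * a"
    using assms by (simp add: field_simps)
  also have "\<dots> \<longleftrightarrow> m \<le> a" using mu0_less_qh by simp
  finally show ?thesis .
qed

lemma not_acts_0:
  assumes "0 \<le> a"
  shows "\<not> acts mu0 qh a 0"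
proof -
  have "0 \<le> a * mu0" using assms mu0_pos by simp
  thus ?thesis using mu0_less_qh by (simp add: acts_def algebra_simps)
qed

lemma expectation_tau:
  assumes "0 < m" "m \<le> 1"
  shows "measure_pmf.expectation (tau mu0 qh m) g
           = signal_prob m * g (nu m) + (1 - signal_prob m) * g 0"
  using signal_prob_pos[OF assms] signal_prob_le_1[OF assms]
  by (simp add: tau_def signal_prob_def algebra_simps)

lemma prob_tau_acts:
  assumes "0 < a" "0 < m" "m \<le> 1"
  shows "measure_pmf.prob (tau mu0 qh m) {v. acts mu0 qh a v}
           = (if m \<le> a then signal_prob m else 0)"
proof -
  have "(\<lambda>b. if b then nu m else 0) -` {v. acts mu0 qh a v} = (if m \<le> a then {True} else {})"
    using acts_nuB_iff[OF assms(1,2)] not_acts_0 assms by auto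
  thus ?thesis using signal_prob_pos[OF assms(2,3)] signal_prob_le_1[OF assms(2,3)]
    by (simp add: tau_def signal_prob_def measure_pmf_single)
qed

lemma bayes_plausible_prior: "bayes_plausible mu0 (return_pmf mu0)"
  using mu0_pos mu0_less_qh qh_less_1 by (simp add: bayes_plausible_def)

lemma OPT_le_signal_prob:
  assumes "0 < a" "a \<le> 1"
  shows "OPT mu0 qh a \<le> signal_prob a"
  unfolding OPT_def
proof (rule cSup_least)
  show "{measure_pmf.prob p {v. acts mu0 qh a v} |p. bayes_plausible mu0 p} \<noteq> {}"
    using bayes_plausible_prior by blast
next
  fix x assume "x \<in> {measure_pmf.prob p {v. acts mu0 qh a v} |p. bayes_plausible mu0 p}"
  then obtain p where bp: "bayes_plausible mu0 p" and x: "x = measure_pmf.prob p {v. nu a \<le> v}"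
    using acts_iff_nuB_le[OF assms(1)] by auto
  have sp: "set_pmf p \<subseteq> {0..1}" and mean: "measure_pmf.expectation p (\<lambda>v. v) = mu0"
    using bp by (auto simp: bayes_plausible_def)
  have nu_pos: "0 < nu a" using qh_le_nuB[OF assms] qh_pos by linarith
  have "(\<integral>v. nu a * indicator {v. nu a \<le> v} v \<partial>measure_pmf p) \<le> (\<integral>v. v \<partial>measure_pmf p)"
  proof (rule integral_mono_AE')
    show "integrable (measure_pmf p) (\<lambda>v. v)"
      by (rule measure_pmf.integrable_const_bound[where B=1])
        (use sp in \<open>auto simp: AE_measure_pmf_iff\<close>)
    show "AE v in measure_pmf p. nu a * indicator {v. nu a \<le> v} v \<le> v"
      using sp nu_pos by (auto simp: AE_measure_pmf_iff indicator_def)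
    show "AE v in measure_pmf p. 0 \<le> v" using sp by (auto simp: AE_measure_pmf_iff)
  qed
  hence "nu a * x \<le> mu0" using mean x by simp
  thus "x \<le> signal_prob a" using nu_pos by (simp add: signal_prob_def le_divide_eq mult.commute)
qed

lemma OPT_nonpos:
  assumes "0 \<le> a" "a < amin"
  shows "OPT mu0 qh a \<le> 0"
  unfolding OPT_def
proof (rule cSup_least)
  show "{measure_pmf.prob p {v. acts mu0 qh a v} |p. bayes_plausible mu0 p} \<noteq> {}"
    using bayes_plausible_prior by blast
next
  have never_acts: "\<not> acts mu0 qh a v" if "v \<le> 1" for v
  proof -
    have "a * (1 - mu0) < qh - mu0"
      using assms qh_less_1 mu0_less_qh by (simp add: alpha_min_def less_divide_eq)
    moreover have "a * v \<le> a" using that assms mult_left_mono[of v 1 a] by simp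
    ultimately show ?thesis by (simp add: acts_def algebra_simps)
  qed
  fix x assume "x \<in> {measure_pmf.prob p {v. acts mu0 qh a v} |p. bayes_plausible mu0 p}"
  then obtain p where p: "bayes_plausible mu0 p" "x = measure_pmf.prob p {v. acts mu0 qh a v}"
    by blast
  have "set_pmf p \<inter> {v. acts mu0 qh a v} = {}"
    using p(1) never_acts by (auto simp: bayes_plausible_def)
  hence "measure_pmf.prob p {v. acts mu0 qh a v} = 0" by (simp only: measure_pmf_zero_iff)
  thus "x \<le> 0" using p(2) by simp
qed

lemma SE_regret_nonpos:
  assumes "0 \<le> a" "a < amin"
  shows "SE_regret mu0 qh a T \<le> 0"
proof -
  have "real T * OPT mu0 qh a \<le> 0" using OPT_nonpos[OF assms] by (simp add: mult_nonneg_nonpos)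
  thus ?thesis
    using se_value_nonneg[of mu0 qh a T T "se_init mu0 qh T"] by (simp add: SE_regret_def)
qed

lemma lip_const_le_div_qh: "lip_const \<le> lip_const / qh"
  using lip_const_pos qh_pos qh_less_1 by (simp add: le_divide_eq)

lemma regret_const_eq: "regret_const = 2 * (1 - mu0)^2 / ((qh - mu0) * qh) + 1"
  by (simp add: regret_const_def lip_const_def)

lemma regret_const_pos: "0 < regret_const"
  using lip_const_pos qh_pos by (simp add: regret_const_def add_pos_nonneg)

lemma lip_const_le: "lip_const \<le> regret_const / 2"
  using lip_const_le_div_qh by (simp add: regret_const_def)

lemma phase_cost_le: "phase_cost \<le> 2 * regret_const"
proof -
  have "1 / qh = 1 + (1 - qh) / qh" using qh_pos by (simp add: field_simps)
  also have "\<dots> \<le> 1 + lip_const / qh"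
    using lip_const_ge mu0_less_qh qh_pos by (simp add: divide_right_mono)
  finally have "1 / qh \<le> 1 + lip_const / qh" .
  thus ?thesis using lip_const_le_div_qh by (simp add: phase_cost_def regret_const_def)
qed

end

section \<open>A potential for Safe Exploration\<close>

definition dist_potential :: "real \<Rightarrow> real \<Rightarrow> real" where
  "dist_potential x e = (if 0 \<le> x then x^2 / e + x else 0)"

lemma dist_potential_nonneg: "0 < e \<Longrightarrow> 0 \<le> dist_potential x e"
  by (simp add: dist_potential_def)

lemma dist_potential_ge: "0 \<le> x \<Longrightarrow> 0 < e \<Longrightarrow> x \<le> dist_potential x e"
  by (simp add: dist_potential_def)

lemma dist_potential_step:
  assumes "0 \<le> x" "0 < e"
  shows "x \<le> dist_potential x e - dist_potential (x - e) e"
proof (cases "0 \<le> x - e")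
  case True
  have "dist_potential x e - dist_potential (x - e) e = 2 * x"
    using assms True by (simp add: dist_potential_def field_simps power2_eq_square)
  thus ?thesis using assms by simp
next
  case False
  thus ?thesis using dist_potential_ge[OF assms] by (simp add: dist_potential_def)
qed

lemma dist_potential_le_3:
  assumes "0 < e" "x \<le> w" "w \<le> 1" "w^2 \<le> 2 * e"
  shows "dist_potential x e \<le> 3"
proof (cases "0 \<le> x")
  case True
  have "x^2 / e \<le> w^2 / e" using True assms by (intro divide_right_mono power_mono) auto
  also have "\<dots> \<le> 2" using assms by (simp add: divide_le_eq)
  finally show ?thesis using True assms by (simp add: dist_potential_def)
qed (simp add: dist_potential_def)

locale se_run = binary_instance +
  fixes a :: real and T :: nat
  assumes T_ge_4: "4 \<le> T" and alpha_min_le_a: "alpha_min mu0 qh \<le> a" and a_le_1: "a \<le> 1"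
begin

lemma a_pos: "0 < a"
  using alpha_min_pos alpha_min_le_a by linarith

lemma se_value_Explore:
  assumes "0 < m" "m \<le> 1"
  shows "se_value mu0 qh a T (Suc n) (Explore lo hi e mp m) =
           (if m \<le> a then signal_prob m else 0)
           + signal_prob m
               * se_value mu0 qh a T n (se_update T (Explore lo hi e mp m) (nu m) (m \<le> a))
           + (1 - signal_prob m) * se_value mu0 qh a T n (Explore lo hi e mp m)"
  using prob_tau_acts[OF a_pos assms] expectation_tau[OF assms] nuB_pos[OF assms]
    acts_nuB_iff[OF a_pos assms(1)]
  by (simp del: se_update.simps) simp

lemma se_value_Exploit:
  assumes "0 < m" "m \<le> 1"
  shows "se_value mu0 qh a T (Suc n) (Exploit m) =
           (if m \<le> a then signal_prob m else 0) + se_value mu0 qh a T n (Exploit m)"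
  using prob_tau_acts[OF a_pos assms] expectation_tau[OF assms] by (simp add: algebra_simps)

definition live_phases :: "real \<Rightarrow> nat set" where
  "live_phases e = {j. 1 / (2 * real T ^ 2) < eps_seq j \<and> eps_seq j \<le> e}"

lemma live_phases_subset: "live_phases e \<subseteq> {j. 1 / (2 * real T ^ 2) < eps_seq j}"
  by (auto simp: live_phases_def)

lemma real_T_ge_4: "4 \<le> real T"
  using T_ge_4 by simp

lemma finite_live_phases: "finite (live_phases e)"
  by (rule finite_subset[OF live_phases_subset finite_eps_seq_gt[OF real_T_ge_4]])

lemma card_live_phases_le: "real (card (live_phases e)) \<le> 48 * ln (ln (real T))"
proof -
  have "card (live_phases e) \<le> card {j. 1 / (2 * real T ^ 2) < eps_seq j}"
    by (rule card_mono[OF finite_eps_seq_gt[OF real_T_ge_4] live_phases_subset])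
  thus ?thesis using card_eps_seq_gt_le[OF real_T_ge_4] by linarith
qed

lemma card_live_phases_square:
  assumes "eps_seq k \<le> e" "1 / (2 * real T ^ 2) < eps_seq k"
  shows "card (live_phases (eps_seq k ^ 2)) < card (live_phases e)"
proof (rule psubset_card_mono[OF finite_live_phases])
  have "eps_seq k ^ 2 < eps_seq k"
    using eps_seq_pos[of k] eps_seq_less_1[of k] by (simp add: power2_eq_square)
  hence "k \<in> live_phases e - live_phases (eps_seq k ^ 2)"
    using assms by (simp add: live_phases_def)
  moreover have "live_phases (eps_seq k ^ 2) \<subseteq> live_phases e"
    using \<open>eps_seq k ^ 2 < eps_seq k\<close> assms(1) by (auto simp: live_phases_def)
  ultimately show "live_phases (eps_seq k ^ 2) \<subset> live_phases e" by blast
qed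

definition potential :: "se_state \<Rightarrow> real" where
  "potential s = (case s of
      Explore lo hi e mp m \<Rightarrow>
        lip_const * dist_potential (a - m) e + 1 / qh + phase_cost * card (live_phases (e^2))
    | Exploit lo \<Rightarrow> 0)"

definition se_inv :: "se_state \<Rightarrow> bool" where
  "se_inv s = (case s of
      Explore lo hi e mp m \<Rightarrow>
        amin \<le> mp \<and> mp \<le> a \<and> m = mp + e \<and> m \<le> hi \<and> a \<le> hi \<and> hi \<le> 1 \<and> e \<in> range eps_seq
    | Exploit lo \<Rightarrow> amin \<le> lo \<and> lo \<le> a \<and> a - lo \<le> 1 / real T)"

lemma potential_nonneg: "se_inv s \<Longrightarrow> 0 \<le> potential s"
  using lip_const_pos phase_cost_pos qh_pos eps_seq_pos dist_potential_nonneg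
  by (auto simp: se_inv_def potential_def split: se_state.splits)

lemma enter_phase_potential:
  assumes lo: "amin \<le> lo" "lo \<le> a" and hi: "a \<le> hi" "hi \<le> 1"
    and width: "(hi - lo)^2 \<le> 2 * e" and e: "e = eps_seq k"
  shows "se_inv (enter_phase T lo hi e)
         \<and> potential (enter_phase T lo hi e) \<le> phase_cost * card (live_phases e)"
proof (cases "1 / real T < hi - lo")
  case False
  thus ?thesis using lo hi phase_cost_pos
    by (simp add: enter_phase_def se_inv_def potential_def)
next
  case True
  have "0 < e" "e < 1" using e eps_seq_pos eps_seq_less_1 by auto
  then obtain j where state: "enter_phase T lo hi e = Explore lo hi (e ^ 2 ^ j) lo (lo + e ^ 2 ^ j)"
    and fits: "e ^ 2 ^ j \<le> hi - lo" and narrow: "(hi - lo)^2 \<le> 2 * e ^ 2 ^ j"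
    using enter_phase_Explore True width by blast
  define e' where "e' = e ^ 2 ^ j"
  have e': "e' = eps_seq (k + j)" using e eps_seq_power e'_def by simp
  have "e' \<le> e" using \<open>0 < e\<close> \<open>e < 1\<close> power_decreasing[of 1 "2 ^ j" e] by (simp add: e'_def)
  have "(1 / real T)^2 < (hi - lo)^2"
    using True by (intro power_strict_mono) auto
  hence low: "1 / (2 * real T ^ 2) < e'"
    using narrow by (simp add: e'_def power_one_over field_simps)
  have "se_inv (Explore lo hi e' lo (lo + e'))"
    using lo hi fits e' by (simp add: se_inv_def e'_def)
  moreover have "dist_potential (a - (lo + e')) e' \<le> 3"
    by (rule dist_potential_le_3[where w = "hi - lo"])
      (use e' eps_seq_pos[of "k + j"] fits narrow hi lo alpha_min_pos in \<open>auto simp: e'_def\<close>)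
  hence "potential (Explore lo hi e' lo (lo + e'))
           \<le> phase_cost * (card (live_phases (e'^2)) + 1)"
    using lip_const_pos by (simp add: potential_def phase_cost_def algebra_simps)
  moreover have "card (live_phases (e'^2)) + 1 \<le> card (live_phases e)"
    using card_live_phases_square[of "k + j" e] \<open>e' \<le> e\<close> low e' by simp
  hence "phase_cost * (card (live_phases (e'^2)) + 1) \<le> phase_cost * card (live_phases e)"
    using phase_cost_pos by (simp only: of_nat_le_iff mult_le_cancel_left_pos)
  ultimately show ?thesis using state by (simp add: e'_def)
qed

lemma se_inv_Explore_bounds:
  assumes "se_inv (Explore lo hi e mp m)"
  shows "0 < e" "amin \<le> m" "0 < m" "m \<le> 1" "nu m \<noteq> 0"
proof -
  obtain k where "e = eps_seq k" "amin \<le> mp" "m = mp + e" "m \<le> hi" "hi \<le> 1"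
    using assms by (auto simp: se_inv_def)
  thus "0 < e" "amin \<le> m" "0 < m" "m \<le> 1" using eps_seq_pos[of k] alpha_min_pos by auto
  thus "nu m \<noteq> 0" using nuB_pos by fastforce
qed

lemma explore_step_acts:
  assumes inv: "se_inv (Explore lo hi e mp m)" and acts: "m \<le> a"
  defines "s' \<equiv> se_update T (Explore lo hi e mp m) (nu m) (m \<le> a)"
  shows "se_inv s' \<and> lip_const * (a - m) \<le> potential (Explore lo hi e mp m) - potential s'"
proof -
  obtain k where I: "amin \<le> mp" "m = mp + e" "a \<le> hi" "hi \<le> 1" "e = eps_seq k"
    using inv by (auto simp: se_inv_def)
  note bounds = se_inv_Explore_bounds[OF inv]
  show ?thesis
  proof (cases "m + e \<le> hi")
    case True
    have s': "s' = Explore lo hi e m (m + e)" using True acts bounds(5) by (simp add: s'_def)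
    have "a - m \<le> dist_potential (a - m) e - dist_potential (a - m - e) e"
      using dist_potential_step acts bounds by simp
    hence "lip_const * (a - m)
             \<le> lip_const * (dist_potential (a - m) e - dist_potential (a - m - e) e)"
      using lip_const_pos by (intro mult_left_mono) auto
    also have "\<dots> = potential (Explore lo hi e mp m) - potential s'"
      by (simp add: s' potential_def algebra_simps)
    finally have "lip_const * (a - m) \<le> potential (Explore lo hi e mp m) - potential s'" .
    moreover have "se_inv s'" using inv acts True bounds(2) by (auto simp: s' se_inv_def)
    ultimately show ?thesis by simp
  next
    case False
    have s': "s' = enter_phase T m hi (e^2)" using False acts bounds(5) by (simp add: s'_def)
    have "(hi - m)^2 \<le> e^2" using False acts I by (intro power_mono) auto
    moreover have "0 \<le> e^2" by simp
    ultimately have "(hi - m)^2 \<le> 2 * e^2" by linarith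
    hence "se_inv s' \<and> potential s' \<le> phase_cost * card (live_phases (e^2))"
      unfolding s' using enter_phase_potential[OF bounds(2) acts I(3,4)] I(5) eps_seq_square
      by simp
    moreover have "lip_const * (a - m) \<le> lip_const * dist_potential (a - m) e"
      using dist_potential_ge acts bounds lip_const_pos by (intro mult_left_mono) auto
    moreover have "potential (Explore lo hi e mp m)
        = lip_const * dist_potential (a - m) e + 1 / qh + phase_cost * card (live_phases (e^2))"
      by (simp add: potential_def)
    moreover have "0 < 1 / qh" using qh_pos by simp
    ultimately show ?thesis by linarith
  qed
qed

lemma explore_step_rejects:
  assumes inv: "se_inv (Explore lo hi e mp m)" and rejects: "a < m"
  defines "s' \<equiv> se_update T (Explore lo hi e mp m) (nu m) (m \<le> a)"
  shows "se_inv s' \<and> 1 / qh \<le> potential (Explore lo hi e mp m) - potential s'"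
proof -
  obtain k where I: "amin \<le> mp" "mp \<le> a" "m = mp + e" "e = eps_seq k"
    using inv by (auto simp: se_inv_def)
  note bounds = se_inv_Explore_bounds[OF inv]
  have s': "s' = enter_phase T mp m (e^2)" using rejects bounds(5) by (simp add: s'_def)
  have "(m - mp)^2 \<le> 2 * e^2" using I(3) by simp
  hence "se_inv s' \<and> potential s' \<le> phase_cost * card (live_phases (e^2))"
    unfolding s' using enter_phase_potential[OF I(1,2) _ bounds(4)] rejects I(4) eps_seq_square
    by simp
  moreover have "0 \<le> lip_const * dist_potential (a - m) e"
    using lip_const_pos dist_potential_nonneg bounds by simp
  ultimately show ?thesis by (simp add: potential_def)
qed

lemma explore_step_loss:
  assumes inv: "se_inv (Explore lo hi e mp m)"
  defines "s' \<equiv> se_update T (Explore lo hi e mp m) (nu m) (m \<le> a)"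
  shows "se_inv s' \<and> signal_prob a - (if m \<le> a then signal_prob m else 0)
           \<le> signal_prob m * (potential (Explore lo hi e mp m) - potential s')"
proof -
  note bounds = se_inv_Explore_bounds[OF inv]
  have f_m: "0 < signal_prob m" using signal_prob_pos bounds by simp
  show ?thesis
  proof (cases "m \<le> a")
    case True
    have "signal_prob a - signal_prob m \<le> signal_prob m * (lip_const * (a - m))"
      using signal_prob_diff_le[OF bounds(2) True] by (simp add: algebra_simps)
    also have "\<dots> \<le> signal_prob m * (potential (Explore lo hi e mp m) - potential s')"
      using explore_step_acts[OF inv True] f_m unfolding s'_def by (intro mult_left_mono) auto
    finally show ?thesis using explore_step_acts[OF inv True] True unfolding s'_def by simp
  next
    case False
    have "signal_prob a \<le> signal_prob m * (1 / qh)"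
      using signal_prob_le_div_qh[OF a_pos a_le_1 bounds(2,4)] by simp
    also have "\<dots> \<le> signal_prob m * (potential (Explore lo hi e mp m) - potential s')"
      using explore_step_rejects[OF inv] False f_m unfolding s'_def by (intro mult_left_mono) auto
    finally show ?thesis using explore_step_rejects[OF inv] False unfolding s'_def by simp
  qed
qed

lemma exploit_loss:
  assumes "se_inv (Exploit lo)"
  shows "signal_prob a - signal_prob lo \<le> lip_const / real T"
proof -
  have lo: "amin \<le> lo" "lo \<le> a" "a - lo \<le> 1 / real T" using assms by (auto simp: se_inv_def)
  have "0 < lo" "lo \<le> 1" using lo alpha_min_pos a_le_1 by linarith+
  hence f_lo: "0 < signal_prob lo" "signal_prob lo \<le> 1"
    using signal_prob_pos signal_prob_le_1 by auto
  have "signal_prob a - signal_prob lo \<le> lip_const * (a - lo) * signal_prob lo"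
    using signal_prob_diff_le lo by simp
  also have "\<dots> \<le> lip_const * (1 / real T) * 1"
    using lo lip_const_pos f_lo by (intro mult_mono) auto
  finally show ?thesis by simp
qed

lemma regret_to_go_le:
  assumes "se_inv s"
  shows "real n * signal_prob a - se_value mu0 qh a T n s
           \<le> potential s + real n * lip_const / real T"
  using assms
proof (induction n arbitrary: s)
  case 0
  thus ?case using potential_nonneg by simp
next
  case (Suc n)
  define R where "R s = real n * signal_prob a - se_value mu0 qh a T n s" for s
  define b where "b = real n * lip_const / real T"
  have b_Suc: "real (Suc n) * lip_const / real T = b + lip_const / real T"
    by (simp add: b_def add_divide_distrib algebra_simps)
  have "0 \<le> lip_const / real T" using lip_const_pos by simp
  show ?case
  proof (cases s)
    case (Exploit lo)
    have lo: "amin \<le> lo" "lo \<le> a" using Suc.prems Exploit by (auto simp: se_inv_def)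
    hence "se_value mu0 qh a T (Suc n) s = signal_prob lo + se_value mu0 qh a T n s"
      using se_value_Exploit[of lo] Exploit alpha_min_pos a_le_1 by simp
    hence "real (Suc n) * signal_prob a - se_value mu0 qh a T (Suc n) s
             = (signal_prob a - signal_prob lo) + R s"
      by (simp add: R_def algebra_simps)
    also have "\<dots> \<le> lip_const / real T + (potential s + b)"
      using exploit_loss Suc.IH Suc.prems Exploit unfolding R_def b_def by (intro add_mono) auto
    finally show ?thesis using b_Suc by simp
  next
    case (Explore lo hi e mp m)
    note bounds = se_inv_Explore_bounds[OF Suc.prems[unfolded Explore]]
    define s' where "s' = se_update T (Explore lo hi e mp m) (nu m) (m \<le> a)"
    define r where "r = (if m \<le> a then signal_prob m else 0)"
    define p where "p = signal_prob m"
    have p: "0 \<le> p" "p \<le> 1"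
      using signal_prob_pos[OF bounds(3,4)] signal_prob_le_1[OF bounds(3,4)] by (auto simp: p_def)
    have step: "se_inv s'" "signal_prob a - r \<le> p * (potential s - potential s')"
      using explore_step_loss Suc.prems Explore by (simp_all add: s'_def r_def p_def)
    have "se_value mu0 qh a T (Suc n) s
            = r + p * se_value mu0 qh a T n s' + (1 - p) * se_value mu0 qh a T n s"
      using se_value_Explore bounds Explore by (simp add: s'_def r_def p_def)
    hence "real (Suc n) * signal_prob a - se_value mu0 qh a T (Suc n) s
             = (signal_prob a - r) + p * R s' + (1 - p) * R s"
      by (simp add: R_def algebra_simps)
    also have "\<dots> \<le> p * (potential s - potential s') + p * (potential s' + b)
                    + (1 - p) * (potential s + b)"
      using step Suc.IH[of s'] Suc.IH[of s] Suc.prems p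
      unfolding R_def b_def by (intro add_mono mult_left_mono) auto
    also have "\<dots> = potential s + b" by (simp add: algebra_simps)
    finally show ?thesis using b_Suc \<open>0 \<le> lip_const / real T\<close> by simp
  qed
qed

lemma se_init_potential:
  "se_inv (se_init mu0 qh T) \<and> potential (se_init mu0 qh T) \<le> phase_cost * card (live_phases (1/2))"
proof -
  have "(1 - amin)^2 \<le> 2 * (1/2)"
    using alpha_min_pos alpha_min_le_1 by (simp add: power_le_one)
  moreover have "1/2 = eps_seq 0" by (simp add: eps_seq_def)
  ultimately show ?thesis
    unfolding se_init_def
    by (rule enter_phase_potential[OF order_refl alpha_min_le_a a_le_1 order_refl])
qed

lemma SE_regret_le: "SE_regret mu0 qh a T \<le> phase_cost * (48 * ln (ln (real T))) + lip_const"
proof -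
  have T: "0 < real T" using T_ge_4 by simp
  have "SE_regret mu0 qh a T \<le> real T * signal_prob a - se_value mu0 qh a T T (se_init mu0 qh T)"
    unfolding SE_regret_def using OPT_le_signal_prob[OF a_pos a_le_1] T by simp
  also have "\<dots> \<le> potential (se_init mu0 qh T) + real T * lip_const / real T"
    using regret_to_go_le se_init_potential by blast
  also have "\<dots> \<le> phase_cost * card (live_phases (1/2)) + lip_const"
    using se_init_potential T by simp
  also have "\<dots> \<le> phase_cost * (48 * ln (ln (real T))) + lip_const"
    using card_live_phases_le phase_cost_pos by simp
  finally show ?thesis .
qed

lemma SE_regret_le_loglog: "SE_regret mu0 qh a T \<le> 100 * regret_const * ln (ln (real T))"
proof -
  define C where "C = regret_const"
  define L where "L = ln (ln (real T))"
  have L: "1/6 \<le> L" using ln_ln_ge real_T_ge_4 by (simp add: L_def)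
  have "SE_regret mu0 qh a T \<le> phase_cost * (48 * L) + lip_const"
    using SE_regret_le by (simp add: L_def)
  also have "\<dots> \<le> (2 * C) * (48 * L) + C / 2"
    using phase_cost_le lip_const_le L unfolding C_def by (intro add_mono mult_right_mono) auto
  also have "\<dots> \<le> 100 * C * L"
  proof -
    have "C / 2 \<le> 3 * (C * L)" "0 \<le> C * L"
      using mult_left_mono[OF L, of C] L regret_const_pos by (simp_all add: C_def)
    moreover have "(2 * C) * (48 * L) = 96 * (C * L)" "100 * C * L = 100 * (C * L)" by simp_all
    ultimately show ?thesis by linarith
  qed
  finally show ?thesis by (simp add: C_def L_def)
qed

end

theorem proposition3p2:
  shows "\<exists>K::real. \<forall>mu0 qh. 0 < mu0 \<longrightarrow> mu0 < qh \<longrightarrow> qh < 1 \<longrightarrow>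
           (\<forall>T::nat. T \<ge> 4 \<longrightarrow> (\<forall>a. 0 < a \<and> a \<le> 1 \<longrightarrow>
              SE_regret mu0 qh a T
                \<le> K * (2 * (1 - mu0)^2 / ((qh - mu0) * qh) + 1) * ln (ln (real T))))"
proof (intro exI[of _ 100] allI impI, elim conjE)
  fix mu0 qh a :: real and T :: nat
  assume params: "0 < mu0" "mu0 < qh" "qh < 1" and T: "4 \<le> T" and a: "0 < a" "a \<le> 1"
  interpret binary_instance mu0 qh using params by unfold_locales
  show "SE_regret mu0 qh a T \<le> 100 * (2 * (1 - mu0)^2 / ((qh - mu0) * qh) + 1) * ln (ln (real T))"
  proof (cases "alpha_min mu0 qh \<le> a")
    case True
    interpret se_run mu0 qh a T using T True a by unfold_locales
    show ?thesis using SE_regret_le_loglog regret_const_eq by simp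
  next
    case False
    have "1/6 \<le> ln (ln (real T))" using ln_ln_ge[of "real T"] T by simp
    hence "0 \<le> 100 * regret_const * ln (ln (real T))" using regret_const_pos by simp
    thus ?thesis using SE_regret_nonpos[of a T] a False regret_const_eq by simp
  qed
qed

end
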